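(* Let $k\ge 2$ be an integer and let $b\in\mathbb{C}\setminus\mathbb{Z}$. Writing $d_j(b)=\delta_{1j}+\mathrm{Li}_{1-j}(e^{-2\pi i b})$, the Hurwitz zeta function satisfies $$\zeta(k,b)=\frac{1}{2b^k}+\frac{(2\pi i)^k d_k(b)}{4(k-1)!}+\frac{(2\pi i)^k e^{-2\pi i b}}{4}\sum_{j=1}^{k}\frac{d_j(b)}{(j-1)!\,(k-j)!}-\frac{i(2\pi i)^k}{2}\int_{0}^{1}\sum_{j=1}^{k}\frac{d_j(b)\left(u^{k-j}e^{-2\pi i b u}-e^{-2\pi i b}\right)}{(j-1)!\,(k-j)!}\cot(\pi u)\,du.$$
   Context: $\zeta(k,b)=\sum_{j=0}^{\infty}(j+b)^{-k}$ is the Hurwitz zeta function. $i$ is the imaginary unit, $\delta_{1j}$ the Kronecker delta, and $\mathrm{Li}_s(z)$ the polylogarithm (analytic continuation of $\sum_{m\ge1}z^m/m^s$; for $s\le0$ an integer it is a rational function of $z$ defined for $z\ne1$). *)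

theory Defs
  imports "HOL-Analysis.Analysis"
begin

definition hurwitz_zeta :: "nat \<Rightarrow> complex \<Rightarrow> complex" where
  "hurwitz_zeta k b = (\<Sum>j. 1 / (of_nat j + b) ^ k)"

text \<open>Polylogarithm of non-positive integer order, Li_{-n}(z), as the rational
  function obtained by analytic continuation: Li_0(z) = z/(1-z) and
  Li_{-(n+1)}(z) = z * d/dz Li_{-n}(z).\<close>
fun polylog_neg :: "nat \<Rightarrow> complex \<Rightarrow> complex" where
  "polylog_neg 0 z = z / (1 - z)"
| "polylog_neg (Suc n) z = z * deriv (polylog_neg n) z"

definition d_coef :: "nat \<Rightarrow> complex \<Rightarrow> complex" where
  "d_coef j b = (if j = 1 then 1 else 0) + polylog_neg (j - 1) (exp (- 2 * pi * \<i> * b))"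

end

theory Submission
  imports Defs "HOL-Complex_Analysis.Complex_Analysis"
begin

text \<open>Write z = exp(-2 pi i b) and P_m(s) = sum_j d_j(b) s^(m-j) / ((j-1)! (m-j)!), so that
  P_m' = P_(m-1). The recurrence Li_(-n)(z) = z (1 + sum_m (n choose m) Li_(-m)(z)) says exactly
  that P_m(0) = z P_m(1) for m >= 2, so repeated integration by parts gives
  int_0^1 P_k(u) e^(-a u) du = a^(-k) whenever e^(-a) = z. Hence the kernel
  g(u) = P_k(u) e^(-2 pi i b u) - z P_k(1), which vanishes at 0 and 1, has n-th Fourier
  coefficient (2 pi i (b + n))^(-k) for n >= 1. Writing cot(pi u) = i (1 + w) / (1 - w) with
  w = e^(-2 pi i u) and expanding geometrically expresses int_0^1 g(u) cot(pi u) du through these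
  coefficients, i.e. through zeta(k, b); the remainder tends to 0 by the Riemann-Lebesgue lemma.
  Below, P_m is \<open>d_poly b m\<close> and g is \<open>hurwitz_kernel b k\<close>.\<close>

lemma sum_atMost_Suc_binomial:
  fixes f :: "nat \<Rightarrow> 'a::semiring_1"
  shows "(\<Sum>m\<le>Suc n. of_nat (Suc n choose m) * f m) =
         (\<Sum>m\<le>n. of_nat (n choose m) * f m) + (\<Sum>m\<le>n. of_nat (n choose m) * f (Suc m))"
proof -
  have "(\<Sum>m\<le>Suc n. of_nat (Suc n choose m) * f m) =
        f 0 + (\<Sum>m\<le>n. of_nat (n choose Suc m) * f (Suc m)) + (\<Sum>m\<le>n. of_nat (n choose m) * f (Suc m))"
    by (subst sum.atMost_Suc_shift) (simp add: sum.distrib distrib_right ac_simps)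
  also have "f 0 + (\<Sum>m\<le>n. of_nat (n choose Suc m) * f (Suc m)) = (\<Sum>m\<le>Suc n. of_nat (n choose m) * f m)"
    by (subst sum.atMost_Suc_shift) simp
  also have "\<dots> = (\<Sum>m\<le>n. of_nat (n choose m) * f m)"
    by (simp add: binomial_eq_0)
  finally show ?thesis .
qed

lemma exp_minus_2pi_i_eq_1_iff: "exp (- 2 * pi * \<i> * b) = 1 \<longleftrightarrow> b \<in> \<int>"
proof
  assume "exp (- 2 * pi * \<i> * b) = 1"
  then obtain n :: int where "Im b = 0" "- (pi * Re b) = pi * of_int n"
    by (auto simp: exp_eq_1)
  then have "Im b = 0" "pi * (Re b + of_int n) = 0"
    by (simp_all add: algebra_simps)
  then have "Im b = 0" "Re b = of_int (- n)"
    by auto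
  then have "b = of_int (- n)"
    by (simp add: complex_eq_iff)
  then show "b \<in> \<int>"
    by simp
next
  assume "b \<in> \<int>"
  then obtain n where "b = of_int n"
    by (auto elim: Ints_cases)
  then show "exp (- 2 * pi * \<i> * b) = 1"
    using exp_2pi_1_int[of "- n"] by (simp add: mult_ac)
qed

lemma polylog_neg_holomorphic: "polylog_neg n holomorphic_on - {1}"
proof (induction n)
  case (Suc n)
  then have "deriv (polylog_neg n) holomorphic_on - {1}"
    by (rule holomorphic_deriv) auto
  then show ?case
    by (auto intro!: holomorphic_intros)
qed (auto intro!: holomorphic_intros)

lemma polylog_neg_recurrence:
  assumes "z \<noteq> 1"
  shows "polylog_neg n z = z * (1 + (\<Sum>m\<le>n. of_nat (n choose m) * polylog_neg m z))"
  using assms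
proof (induction n arbitrary: z)
  case 0
  then show ?case
    by (simp add: field_simps)
next
  case (Suc n)
  define R where "R = (\<lambda>w. w * (1 + (\<Sum>m\<le>n. of_nat (n choose m) * polylog_neg m w)))"
  have "eventually (\<lambda>w. w \<in> - {1}) (nhds z)"
    using Suc.prems by (intro eventually_nhds_in_open) auto
  then have "eventually (\<lambda>w. polylog_neg n w = R w) (nhds z)"
    by eventually_elim (use Suc.IH R_def in auto)
  then have "deriv (polylog_neg n) z = deriv R z"
    by (rule deriv_cong_ev) simp
  also have "\<dots> = 1 + (\<Sum>m\<le>n. of_nat (n choose m) * polylog_neg m z)
                     + z * (\<Sum>m\<le>n. of_nat (n choose m) * deriv (polylog_neg m) z)"
  proof (rule DERIV_imp_deriv)
    have "(polylog_neg m has_field_derivative deriv (polylog_neg m) z) (at z)" for m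
      using polylog_neg_holomorphic Suc.prems by (intro holomorphic_derivI[of _ "- {1}"]) auto
    then show "(R has_field_derivative 1 + (\<Sum>m\<le>n. of_nat (n choose m) * polylog_neg m z)
                     + z * (\<Sum>m\<le>n. of_nat (n choose m) * deriv (polylog_neg m) z)) (at z)"
      unfolding R_def by (auto intro!: derivative_eq_intros simp del: polylog_neg.simps simp: algebra_simps)
  qed
  finally have "polylog_neg (Suc n) z = z * (1 + (\<Sum>m\<le>n. of_nat (n choose m) * polylog_neg m z)
                  + (\<Sum>m\<le>n. of_nat (n choose m) * polylog_neg (Suc m) z))"
    by (simp add: algebra_simps sum_distrib_left)
  then show ?case
    by (simp only: sum_atMost_Suc_binomial add.assoc)
qed

lemma d_coef_recurrence:
  assumes "b \<notin> \<int>"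
  shows "d_coef (Suc n) b =
           exp (- 2 * pi * \<i> * b) * (\<Sum>i\<le>n. of_nat (n choose i) * d_coef (Suc i) b)
           + (if n = 0 then 1 else 0)"
proof -
  define z where "z = exp (- 2 * pi * \<i> * b)"
  have "z \<noteq> 1"
    unfolding z_def using assms exp_minus_2pi_i_eq_1_iff[of b] by blast
  have "(\<Sum>i\<le>n. of_nat (n choose i) * d_coef (Suc i) b)
          = 1 + (\<Sum>i\<le>n. of_nat (n choose i) * polylog_neg i z)"
    by (simp add: d_coef_def z_def sum.distrib distrib_left sum.atMost_shift)
  with polylog_neg_recurrence[OF \<open>z \<noteq> 1\<close>, of n] show ?thesis
    by (simp add: d_coef_def z_def)
qed

definition d_poly :: "complex \<Rightarrow> nat \<Rightarrow> complex \<Rightarrow> complex" where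
  "d_poly b m s = (\<Sum>j=1..m. d_coef j b * s ^ (m - j) / (fact (j - 1) * fact (m - j)))"

lemma d_poly_at_0: "m \<ge> 1 \<Longrightarrow> d_poly b m 0 = d_coef m b / fact (m - 1)"
proof -
  assume "m \<ge> 1"
  then have "d_poly b m 0 = (\<Sum>j\<in>{m}. d_coef j b * 0 ^ (m - j) / (fact (j - 1) * fact (m - j)))"
    unfolding d_poly_def by (intro sum.mono_neutral_right) auto
  then show ?thesis
    by simp
qed

lemma d_poly_order_one: "d_poly b 1 s = d_coef 1 b"
  by (simp add: d_poly_def)

lemma d_poly_boundary:
  assumes "m \<ge> 2" "b \<notin> \<int>"
  shows "d_poly b m 0 = exp (- 2 * pi * \<i> * b) * d_poly b m 1"
proof -
  obtain n where m: "m = Suc n" "n \<ge> 1"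
    using assms(1) by (cases m) auto
  have "d_poly b m 1 = (\<Sum>i=0..n. d_coef (Suc i) b / (fact i * fact (n - i)))"
    by (simp add: d_poly_def m sum.shift_bounds_cl_Suc_ivl del: sum.cl_ivl_Suc)
  also have "\<dots> = (\<Sum>i\<le>n. of_nat (n choose i) * d_coef (Suc i) b) / fact n"
    by (simp add: atMost_atLeast0 sum_divide_distrib binomial_fact field_simps)
  finally show ?thesis
    using d_coef_recurrence[OF assms(2), of n] m by (simp add: d_poly_at_0)
qed

lemma has_field_derivative_power_div_fact:
  "((\<lambda>s. s ^ Suc r / fact (Suc r)) has_field_derivative s ^ r / fact r) (at s)"
  for s :: "'a::real_normed_field"
proof -
  have "((\<lambda>s. s ^ Suc r) has_field_derivative of_nat (Suc r) * (1 * s ^ (Suc r - Suc 0))) (at s)"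
    by (rule DERIV_power[OF DERIV_ident])
  from DERIV_cdivide[OF this, of "fact (Suc r)"] show ?thesis
    by (simp add: fact_Suc field_simps del: of_nat_Suc)
qed

lemma d_poly_has_field_derivative: "(d_poly b (Suc m) has_field_derivative d_poly b m s) (at s)"
proof -
  define c where "c j = d_coef j b / fact (j - 1)" for j
  have "((\<lambda>s. (\<Sum>j=1..m. c j * (s ^ Suc (m - j) / fact (Suc (m - j)))) + d_coef (Suc m) b / fact m)
          has_field_derivative (\<Sum>j=1..m. c j * (s ^ (m - j) / fact (m - j))) + 0) (at s)"
    by (intro DERIV_add DERIV_sum DERIV_cmult has_field_derivative_power_div_fact DERIV_const)
  moreover have "(\<lambda>s. (\<Sum>j=1..m. c j * (s ^ Suc (m - j) / fact (Suc (m - j)))) + d_coef (Suc m) b / fact m)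
                   = d_poly b (Suc m)"
    by (auto simp: d_poly_def c_def Suc_diff_le intro!: sum.cong)
  moreover have "(\<Sum>j=1..m. c j * (s ^ (m - j) / fact (m - j))) + 0 = d_poly b m s"
    by (simp add: d_poly_def c_def)
  ultimately show ?thesis
    by simp
qed

lemma fundamental_theorem_of_calculus_01:
  assumes "\<And>s. s \<in> S \<Longrightarrow> (f has_field_derivative f' s) (at s)"
    and "\<And>u. u \<in> {0..1} \<Longrightarrow> complex_of_real u \<in> S"
  shows "((\<lambda>u. f' (of_real u)) has_integral f 1 - f 0) {0..1::real}"
proof -
  have "((\<lambda>u. f (of_real u)) has_vector_derivative f' (of_real u)) (at u within {0..1})"
    if "u \<in> {0..1}" for u
    using assms that by (intro has_vector_derivative_real_field) auto
  from fundamental_theorem_of_calculus[OF _ this] show ?thesis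
    by simp
qed

lemma has_integral_exp_linear:
  fixes a :: complex
  assumes "a \<noteq> 0"
  shows "((\<lambda>u. exp (- a * of_real u)) has_integral (1 - exp (- a)) / a) {0..1}"
proof -
  have "((\<lambda>u. exp (- a * of_real u)) has_integral (- exp (- a * 1) / a) - (- exp (- a * 0) / a)) {0..1}"
    using assms
    by (intro fundamental_theorem_of_calculus_01[where S = UNIV and f = "\<lambda>s. - exp (- a * s) / a"])
       (auto intro!: derivative_eq_intros simp: field_simps)
  then show ?thesis
    by (simp add: diff_divide_distrib)
qed

lemma exp_minus_2pi_i_of_nat: "exp (- 2 * pi * \<i> * of_nat n) = 1"
  by (simp only: exp_minus_2pi_i_eq_1_iff Ints_of_nat)

text \<open>Integration by parts with the antiderivative \<open>d_poly b (Suc m)\<close> of \<open>d_poly b m\<close>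
  lowers \<open>m\<close>; the boundary terms cancel because \<open>exp (- a)\<close> is the factor relating
  \<open>d_poly b (Suc m)\<close> at \<open>0\<close> and at \<open>1\<close>.\<close>
lemma has_integral_d_poly_exp:
  assumes "b \<notin> \<int>" "a \<noteq> 0" "exp (- a) = exp (- 2 * pi * \<i> * b)" "m \<ge> 1"
  shows "((\<lambda>u. d_poly b m (of_real u) * exp (- a * of_real u)) has_integral 1 / a ^ m) {0..1}"
  using assms(4)
proof (induction m rule: nat_induct_at_least)
  case base
  have "exp (- 2 * pi * \<i> * b) \<noteq> 1"
    using assms(1) exp_minus_2pi_i_eq_1_iff by blast
  then have "d_coef 1 b * ((1 - exp (- a)) / a) = 1 / a ^ 1"
    using assms(2,3) by (simp add: d_coef_def field_simps)
  with has_integral_mult_right[OF has_integral_exp_linear[OF assms(2)], of "d_coef 1 b"]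
  show ?case
    by (simp only: d_poly_order_one)
next
  case (Suc m)
  define F where "F s = - d_poly b (Suc m) s * exp (- a * s) / a" for s
  have "((\<lambda>u. d_poly b (Suc m) (of_real u) * exp (- a * of_real u)
             - d_poly b m (of_real u) * exp (- a * of_real u) / a) has_integral F 1 - F 0) {0..1}"
    unfolding F_def using assms(2)
    by (intro fundamental_theorem_of_calculus_01[where S = UNIV])
       (auto intro!: derivative_eq_intros d_poly_has_field_derivative simp: field_simps)
  moreover have "F 1 - F 0 = 0"
    using d_poly_boundary[of "Suc m" b] Suc.hyps assms(1,3) by (simp add: F_def field_simps)
  moreover have "((\<lambda>u. d_poly b m (of_real u) * exp (- a * of_real u) / a) has_integral 1 / a ^ m / a) {0..1}"
    by (intro has_integral_divide Suc.IH)
  ultimately have "((\<lambda>u. (d_poly b (Suc m) (of_real u) * exp (- a * of_real u)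
             - d_poly b m (of_real u) * exp (- a * of_real u) / a)
             + d_poly b m (of_real u) * exp (- a * of_real u) / a) has_integral 0 + 1 / a ^ m / a) {0..1}"
    by (intro has_integral_add) auto
  then show ?case
    by (simp add: mult.commute)
qed

definition hurwitz_kernel :: "complex \<Rightarrow> nat \<Rightarrow> complex \<Rightarrow> complex" where
  "hurwitz_kernel b k s = d_poly b k s * exp (- 2 * pi * \<i> * b * s) - exp (- 2 * pi * \<i> * b) * d_poly b k 1"

definition fourier_coeff :: "(complex \<Rightarrow> complex) \<Rightarrow> nat \<Rightarrow> complex" where
  "fourier_coeff f n = integral {0..1} (\<lambda>u. f (of_real u) * exp (- 2 * pi * \<i> * of_nat n * of_real u))"

lemma has_integral_exp_2pi_i_nat:
  "((\<lambda>u. exp (- 2 * pi * \<i> * of_nat n * of_real u)) has_integral (if n = 0 then 1 else 0)) {0..1}"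
proof (cases "n = 0")
  case True
  then show ?thesis
    using has_integral_const_real[of "1::complex" 0 1] by simp
next
  case False
  then show ?thesis
    using has_integral_exp_linear[of "2 * pi * \<i> * of_nat n"] by (simp add: mult_ac exp_minus)
qed

lemma fourier_coeff_hurwitz_kernel:
  assumes "k \<ge> 1" "b \<notin> \<int>"
  shows "fourier_coeff (hurwitz_kernel b k) n = 1 / (2 * pi * \<i> * (b + of_nat n)) ^ k
           - (if n = 0 then exp (- 2 * pi * \<i> * b) * d_poly b k 1 else 0)"
proof -
  define a where "a = 2 * pi * \<i> * (b + of_nat n)"
  have "b + of_nat n \<noteq> 0"
  proof
    assume "b + of_nat n = 0"
    then have "b = - of_nat n"
      by (simp add: eq_neg_iff_add_eq_0)
    with assms(2) show False
      by simp
  qed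
  then have "a \<noteq> 0"
    by (simp add: a_def)
  have exp_a: "exp (- a * s) = exp (- 2 * pi * \<i> * b * s) * exp (- 2 * pi * \<i> * of_nat n * s)" for s
    by (simp add: a_def algebra_simps flip: exp_add)
  have exp_minus_a: "exp (- a) = exp (- 2 * pi * \<i> * b)"
    using exp_a[of 1] exp_minus_2pi_i_of_nat[of n] by simp
  have integrand: "hurwitz_kernel b k (of_real u) * exp (- 2 * pi * \<i> * of_nat n * of_real u)
      = d_poly b k (of_real u) * exp (- a * of_real u)
        - exp (- 2 * pi * \<i> * b) * d_poly b k 1 * exp (- 2 * pi * \<i> * of_nat n * of_real u)" for u
    by (simp only: hurwitz_kernel_def exp_a) (simp add: algebra_simps)
  from has_integral_diff[OF has_integral_d_poly_exp[OF assms(2) \<open>a \<noteq> 0\<close> exp_minus_a assms(1)]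
                            has_integral_mult_right[OF has_integral_exp_2pi_i_nat]]
  have "((\<lambda>u. hurwitz_kernel b k (of_real u) * exp (- 2 * pi * \<i> * of_nat n * of_real u)) has_integral
          1 / a ^ k - exp (- 2 * pi * \<i> * b) * d_poly b k 1 * (if n = 0 then 1 else 0)) {0..1}"
    unfolding integrand .
  then show ?thesis
    unfolding fourier_coeff_def a_def by (simp add: integral_unique)
qed

lemma exp_minus_2pi_i_neq_1:
  assumes "0 < u" "u < 1"
  shows "exp (- 2 * pi * \<i> * complex_of_real u) \<noteq> 1"
proof
  assume "exp (- 2 * pi * \<i> * complex_of_real u) = 1"
  then have "u \<in> \<int>"
    by (simp only: exp_minus_2pi_i_eq_1_iff of_real_in_Ints_iff)
  with assms show False
    by (auto elim!: Ints_cases)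
qed

lemma entire_factor_zeros_0_1:
  fixes f :: "complex \<Rightarrow> complex"
  assumes holf: "f holomorphic_on UNIV" and "f 0 = 0" "f 1 = 0"
  obtains f2 where "f2 holomorphic_on UNIV" "\<And>s. f s = s * (s - 1) * f2 s"
    "f2 0 = - deriv f 0" "f2 1 = deriv f 1"
proof -
  define h1 where "h1 s = (if s = 0 then deriv f 0 else (f s - f 0) / (s - 0))" for s
  have hol1: "h1 holomorphic_on UNIV"
    unfolding h1_def[abs_def] by (rule pole_lemma_open[OF holf]) simp
  define h2 where "h2 s = (if s = 1 then deriv h1 1 else (h1 s - h1 1) / (s - 1))" for s
  have hol2: "h2 holomorphic_on UNIV"
    unfolding h2_def[abs_def] by (rule pole_lemma_open[OF hol1]) simp
  have "h1 1 = 0"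
    using assms by (simp add: h1_def)
  then have f_eq: "f = (\<lambda>s. s * (s - 1) * h2 s)"
    using assms by (auto simp: h1_def h2_def fun_eq_iff)
  have "(h2 has_field_derivative deriv h2 s) (at s)" for s
    using hol2 by (intro holomorphic_derivI[of _ UNIV]) auto
  then have "deriv f 0 = - h2 0" "deriv f 1 = h2 1"
    unfolding f_eq by (auto intro!: DERIV_imp_deriv derivative_eq_intros)
  with that[OF hol2] f_eq show ?thesis
    by auto
qed

text \<open>Both \<open>g\<close> and \<open>1 - exp (- 2 * pi * \<i> * s)\<close> have simple zeros at \<open>0\<close> and \<open>1\<close>,
  and the latter has no other zeros on \<open>[0, 1]\<close>.\<close>
lemma entire_divide_one_minus_exp:
  fixes g :: "complex \<Rightarrow> complex"
  assumes "g holomorphic_on UNIV" "g 0 = 0" "g 1 = 0"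
  obtains H S where "open S" "H holomorphic_on S" "complex_of_real ` {0..1} \<subseteq> S"
    "\<And>s. s \<in> S \<Longrightarrow> g s = H s * (1 - exp (- 2 * pi * \<i> * s))"
proof -
  define E where "E s = 1 - exp (- 2 * pi * \<i> * s)" for s
  have "E holomorphic_on UNIV"
    unfolding E_def[abs_def] by (auto intro!: holomorphic_intros)
  moreover have "E 0 = 0" "E 1 = 0"
    using exp_minus_2pi_i_of_nat[of 1] by (simp_all add: E_def)
  ultimately obtain E2 where E2: "E2 holomorphic_on UNIV" "\<And>s. E s = s * (s - 1) * E2 s"
    "E2 0 = - deriv E 0" "E2 1 = deriv E 1"
    using entire_factor_zeros_0_1 by metis
  obtain g2 where g2: "g2 holomorphic_on UNIV" "\<And>s. g s = s * (s - 1) * g2 s"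
    using entire_factor_zeros_0_1[OF assms] by blast
  define S where "S = {s. E2 s \<noteq> 0}"
  have "open S"
    unfolding S_def by (rule open_Collect_neq) (auto intro: holomorphic_on_imp_continuous_on E2(1))
  moreover have "(\<lambda>s. g2 s / E2 s) holomorphic_on S"
    unfolding S_def by (auto intro!: holomorphic_intros holomorphic_on_subset[OF g2(1)]
                                     holomorphic_on_subset[OF E2(1)])
  moreover have "complex_of_real ` {0..1} \<subseteq> S"
  proof (intro image_subsetI)
    fix u :: real
    assume u: "u \<in> {0..1}"
    show "complex_of_real u \<in> S"
    proof (cases "u = 0 \<or> u = 1")
      case True
      have "deriv E s = 2 * pi * \<i> * exp (- 2 * pi * \<i> * s)" for s
        unfolding E_def[abs_def] by (rule DERIV_imp_deriv) (auto intro!: derivative_eq_intros)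
      with True show ?thesis
        using E2(3,4) exp_minus_2pi_i_of_nat[of 1] by (auto simp: S_def)
    next
      case False
      with u have "E (of_real u) \<noteq> 0"
        using exp_minus_2pi_i_neq_1[of u] by (simp add: E_def)
      then show ?thesis
        using E2(2) by (auto simp: S_def)
    qed
  qed
  moreover have "g s = g2 s / E2 s * E s" if "s \<in> S" for s
    using that by (simp add: S_def g2(2) E2(2))
  ultimately show ?thesis
    using that[of S "\<lambda>s. g2 s / E2 s"] by (auto simp: E_def)
qed

lemma cot_pi_eq_exp:
  assumes "0 < u" "u < 1"
  shows "complex_of_real (cot (pi * u)) =
           \<i> * (1 + exp (- 2 * pi * \<i> * of_real u)) / (1 - exp (- 2 * pi * \<i> * of_real u))"
proof -
  define A where "A = exp (\<i> * of_real (pi * u))"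
  define B where "B = exp (- (\<i> * of_real (pi * u)))"
  have "A * B = 1"
    by (simp add: A_def B_def flip: exp_add)
  have w: "exp (- 2 * pi * \<i> * of_real u) = B ^ 2"
    by (simp add: B_def algebra_simps flip: exp_of_nat_mult)
  have "1 - B ^ 2 \<noteq> 0"
    using exp_minus_2pi_i_neq_1[OF assms] w by simp
  then have "B * (A - B) \<noteq> 0"
    using \<open>A * B = 1\<close> by (auto simp: algebra_simps power2_eq_square)
  have "complex_of_real (cot (pi * u)) = cos (of_real (pi * u)) / sin (of_real (pi * u))"
    unfolding cot_def cos_of_real sin_of_real by simp
  also have "\<dots> = \<i> * (B * (A + B)) / (B * (A - B))"
    using \<open>B * (A - B) \<noteq> 0\<close> by (simp add: cos_exp_eq sin_exp_eq A_def B_def field_simps)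
  also have "\<dots> = \<i> * (1 + B ^ 2) / (1 - B ^ 2)"
    using \<open>A * B = 1\<close> by (simp add: algebra_simps power2_eq_square)
  finally show ?thesis
    unfolding w .
qed

lemma continuous_on_of_real_unit_interval:
  assumes "continuous_on S F" "complex_of_real ` {0..1} \<subseteq> S"
  shows "continuous_on {0..1} (\<lambda>u. F (complex_of_real u))"
  by (rule continuous_on_compose2[OF assms(1) _ assms(2)]) (intro continuous_intros)

lemma fourier_coeff_has_integral:
  assumes "continuous_on {0..1} (\<lambda>u. f (complex_of_real u))"
  shows "((\<lambda>u. f (of_real u) * exp (- 2 * pi * \<i> * of_nat n * of_real u)) has_integral fourier_coeff f n) {0..1}"
  unfolding fourier_coeff_def
  by (intro integrable_integral integrable_continuous_interval continuous_intros assms)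

lemma fourier_coeff_integration_by_parts:
  assumes "H holomorphic_on S" "open S" "complex_of_real ` {0..1} \<subseteq> S" "n \<ge> 1"
  shows "fourier_coeff H n = (H 0 - H 1 + fourier_coeff (deriv H) n) / (2 * pi * \<i> * of_nat n)"
proof -
  define a where "a = 2 * pi * \<i> * of_nat n"
  have "a \<noteq> 0"
    using assms(4) by (simp add: a_def)
  have exp_a: "exp (- a * of_real u) = exp (- 2 * pi * \<i> * of_nat n * of_real u)" for u
    by (simp add: a_def)
  define F where "F s = - H s * exp (- a * s) / a" for s
  have dH: "(H has_field_derivative deriv H s) (at s)" if "s \<in> S" for s
    using assms(1,2) that by (intro holomorphic_derivI)
  have ibp: "((\<lambda>u. H (of_real u) * exp (- a * of_real u) - deriv H (of_real u) * exp (- a * of_real u) / a)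
               has_integral F 1 - F 0) {0..1}"
    unfolding F_def using \<open>a \<noteq> 0\<close> assms(3)
    by (intro fundamental_theorem_of_calculus_01[where S = S])
       (auto intro!: derivative_eq_intros dH simp: field_simps)
  have "continuous_on {0..1} (\<lambda>u. deriv H (complex_of_real u))"
    using assms by (intro continuous_on_of_real_unit_interval holomorphic_on_imp_continuous_on holomorphic_deriv)
  from has_integral_divide[OF fourier_coeff_has_integral[OF this], where c = a]
  have "((\<lambda>u. deriv H (of_real u) * exp (- a * of_real u) / a) has_integral fourier_coeff (deriv H) n / a) {0..1}"
    by (simp only: exp_a)
  from has_integral_add[OF ibp this]
  have "((\<lambda>u. H (of_real u) * exp (- a * of_real u)) has_integral F 1 - F 0 + fourier_coeff (deriv H) n / a) {0..1}"
    by simp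
  moreover have "F 1 - F 0 = (H 0 - H 1) / a"
    using exp_minus_2pi_i_of_nat[of n] by (simp add: F_def a_def diff_divide_distrib)
  ultimately have "fourier_coeff H n = (H 0 - H 1) / a + fourier_coeff (deriv H) n / a"
    unfolding fourier_coeff_def[of H] exp_a[symmetric] by (simp add: integral_unique)
  then show ?thesis
    by (simp add: a_def add_divide_distrib)
qed

lemma fourier_coeff_tendsto_0:
  assumes "H holomorphic_on S" "open S" "complex_of_real ` {0..1} \<subseteq> S"
  shows "fourier_coeff H \<longlonglongrightarrow> 0"
proof -
  have "continuous_on {0..1} (\<lambda>u. deriv H (complex_of_real u))"
    using assms by (intro continuous_on_of_real_unit_interval holomorphic_on_imp_continuous_on holomorphic_deriv)
  then have "bounded ((\<lambda>u. deriv H (complex_of_real u)) ` {0..1})"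
    by (intro compact_imp_bounded compact_continuous_image) auto
  then obtain B where B: "B > 0" "\<And>u. u \<in> {0..1} \<Longrightarrow> norm (deriv H (complex_of_real u)) \<le> B"
    by (auto simp: bounded_pos)
  have "norm (fourier_coeff (deriv H) n) \<le> B" for n
  proof -
    have "((\<lambda>u. deriv H (of_real u) * exp (- 2 * pi * \<i> * of_nat n * of_real u))
             has_integral fourier_coeff (deriv H) n) (cbox 0 1)"
      using fourier_coeff_has_integral[OF \<open>continuous_on {0..1} _\<close>] by simp
    then show ?thesis
      by (rule order_trans[OF has_integral_bound[OF less_imp_le[OF B(1)]]])
         (use B(2) in \<open>simp_all add: norm_mult norm_exp_eq_Re\<close>)
  qed
  define K where "K = (norm (H 0) + norm (H 1) + B) / (2 * pi)"
  have bound: "norm (fourier_coeff H n) \<le> K * inverse (real n)" if "n \<ge> 1" for n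
  proof -
    have "norm (H 0 - H 1 + fourier_coeff (deriv H) n) \<le> norm (H 0) + norm (H 1) + B"
      using norm_triangle_ineq[of "H 0 - H 1" "fourier_coeff (deriv H) n"] norm_triangle_ineq4[of "H 0" "H 1"]
            \<open>norm (fourier_coeff (deriv H) n) \<le> B\<close> by linarith
    then have "norm (H 0 - H 1 + fourier_coeff (deriv H) n) / (2 * pi * real n)
                 \<le> (norm (H 0) + norm (H 1) + B) / (2 * pi * real n)"
      using that by (intro divide_right_mono) auto
    also have "(norm (H 0) + norm (H 1) + B) / (2 * pi * real n) = K * inverse (real n)"
      unfolding K_def by (simp only: divide_inverse inverse_mult_distrib mult.assoc)
    also have "norm (H 0 - H 1 + fourier_coeff (deriv H) n) / (2 * pi * real n) = norm (fourier_coeff H n)"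
      using fourier_coeff_integration_by_parts[OF assms that] by (simp add: norm_divide norm_mult)
    finally show ?thesis .
  qed
  show ?thesis
  proof (rule Lim_null_comparison)
    show "\<forall>\<^sub>F n in sequentially. norm (fourier_coeff H n) \<le> K * inverse (real n)"
      using bound by (rule eventually_sequentiallyI)
    show "(\<lambda>n. K * inverse (real n)) \<longlonglongrightarrow> 0"
      using tendsto_mult_right_zero[OF lim_inverse_n, of K] by simp
  qed
qed

lemma one_plus_eq_geometric:
  fixes w :: "'a::comm_ring_1"
  shows "1 + w = (1 - w) + 2 * (\<Sum>n<N. (1 - w) * w ^ Suc n) + 2 * w ^ Suc N"
  by (induction N) (simp_all add: algebra_simps)

text \<open>The factor \<open>1 - w\<close> cancels the pole of \<open>cot (pi * u) = \<i> * (1 + w) / (1 - w)\<close>.\<close>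
lemma cot_pi_geometric_expansion:
  assumes "0 < u" "u < 1"
  defines "w \<equiv> exp (- 2 * pi * \<i> * complex_of_real u)"
  shows "h * (1 - w) * of_real (cot (pi * u)) =
           \<i> * (h * (1 - w)) + 2 * \<i> * (\<Sum>n<N. h * (1 - w) * w ^ Suc n) + 2 * \<i> * (h * w ^ Suc N)"
proof -
  have "1 - w \<noteq> 0"
    using exp_minus_2pi_i_neq_1[OF assms(1,2)] by (simp add: w_def)
  moreover have "of_real (cot (pi * u)) = \<i> * (1 + w) / (1 - w)"
    using cot_pi_eq_exp[OF assms(1,2)] by (simp only: w_def)
  ultimately have "h * (1 - w) * of_real (cot (pi * u)) = \<i> * h * (1 + w)"
    by simp
  also have "\<dots> = \<i> * h * ((1 - w) + 2 * (\<Sum>n<N. (1 - w) * w ^ Suc n) + 2 * w ^ Suc N)"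
    by (simp only: one_plus_eq_geometric[of w N])
  also have "\<dots> = \<i> * (h * (1 - w)) + 2 * \<i> * (h * (\<Sum>n<N. (1 - w) * w ^ Suc n)) + 2 * \<i> * (h * w ^ Suc N)"
    by (simp add: algebra_simps)
  finally show ?thesis
    by (simp add: sum_distrib_left mult.assoc)
qed

lemma has_integral_cot_partial_sum:
  assumes contH: "continuous_on {0..1} (\<lambda>u. H (complex_of_real u))"
    and g_eq: "\<And>u. u \<in> {0..1} \<Longrightarrow> g (of_real u) = H (of_real u) * (1 - exp (- 2 * pi * \<i> * of_real u))"
  shows "((\<lambda>u. g (of_real u) * of_real (cot (pi * u))) has_integral
           \<i> * fourier_coeff g 0 + 2 * \<i> * (\<Sum>n<N. fourier_coeff g (Suc n))
           + 2 * \<i> * fourier_coeff H (Suc N)) {0..1}"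
proof -
  define e where "e n u = exp (- 2 * pi * \<i> * of_nat n * of_real u)" for n and u :: real
  have "continuous_on {0..1} (\<lambda>u. H (of_real u) * (1 - exp (- 2 * pi * \<i> * of_real u)))"
    by (intro continuous_intros contH)
  then have contg: "continuous_on {0..1} (\<lambda>u. g (complex_of_real u))"
    by (rule continuous_on_eq) (simp add: g_eq)
  have "((\<lambda>u. \<i> * (g (of_real u) * e 0 u) + 2 * \<i> * (\<Sum>n<N. g (of_real u) * e (Suc n) u)
               + 2 * \<i> * (H (of_real u) * e (Suc N) u)) has_integral
          \<i> * fourier_coeff g 0 + 2 * \<i> * (\<Sum>n<N. fourier_coeff g (Suc n))
          + 2 * \<i> * fourier_coeff H (Suc N)) {0..1}"
    unfolding e_def
    by (intro has_integral_add has_integral_mult_right has_integral_sum fourier_coeff_has_integral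
              contg contH finite_lessThan)
  moreover have "g (of_real u) * of_real (cot (pi * u)) =
                   \<i> * (g (of_real u) * e 0 u) + 2 * \<i> * (\<Sum>n<N. g (of_real u) * e (Suc n) u)
                   + 2 * \<i> * (H (of_real u) * e (Suc N) u)"
    if u: "u \<in> {0..1} - {0, 1}" for u
  proof -
    define w where "w = exp (- 2 * pi * \<i> * complex_of_real u)"
    have "e n u = w ^ n" for n
      by (simp add: e_def w_def algebra_simps flip: exp_of_nat_mult)
    moreover have "g (of_real u) = H (of_real u) * (1 - w)"
      using u g_eq unfolding w_def by auto
    ultimately show ?thesis
      using cot_pi_geometric_expansion[of u "H (of_real u)" N, folded w_def] u by simp
  qed
  ultimately show ?thesis
    by (subst has_integral_spike_finite_eq[of "{0, 1}"]) auto
qed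

lemma has_integral_cot_fourier_series:
  assumes "H holomorphic_on S" "open S" "complex_of_real ` {0..1} \<subseteq> S"
    and "\<And>s. s \<in> S \<Longrightarrow> g s = H s * (1 - exp (- 2 * pi * \<i> * s))"
    and "(\<lambda>n. fourier_coeff g (Suc n)) sums L"
  shows "((\<lambda>u. g (of_real u) * of_real (cot (pi * u))) has_integral \<i> * fourier_coeff g 0 + 2 * \<i> * L) {0..1}"
proof -
  define I where "I N = \<i> * fourier_coeff g 0 + 2 * \<i> * (\<Sum>n<N. fourier_coeff g (Suc n))
                          + 2 * \<i> * fourier_coeff H (Suc N)" for N
  have "continuous_on {0..1} (\<lambda>u. H (complex_of_real u))"
    using assms(1,3) by (intro continuous_on_of_real_unit_interval holomorphic_on_imp_continuous_on)
  moreover have "complex_of_real u \<in> S" if "u \<in> {0..1}" for u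
    using assms(3) that by auto
  ultimately have partial: "((\<lambda>u. g (of_real u) * of_real (cot (pi * u))) has_integral I N) {0..1}" for N
    unfolding I_def by (intro has_integral_cot_partial_sum) (simp_all add: assms(4))
  have "(\<lambda>N. \<Sum>n<N. fourier_coeff g (Suc n)) \<longlonglongrightarrow> L"
    using assms(5) by (simp add: sums_def)
  moreover have "(\<lambda>N. fourier_coeff H (Suc N)) \<longlonglongrightarrow> 0"
    using LIMSEQ_Suc[OF fourier_coeff_tendsto_0[OF assms(1-3)]] .
  ultimately have "I \<longlonglongrightarrow> \<i> * fourier_coeff g 0 + 2 * \<i> * L + 2 * \<i> * 0"
    unfolding I_def by (intro tendsto_add tendsto_mult_left tendsto_const)
  moreover have "I = (\<lambda>N. integral {0..1} (\<lambda>u. g (of_real u) * of_real (cot (pi * u))))"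
    by (simp add: fun_eq_iff integral_unique[OF partial, symmetric])
  ultimately have "integral {0..1} (\<lambda>u. g (of_real u) * of_real (cot (pi * u)))
                     = \<i> * fourier_coeff g 0 + 2 * \<i> * L"
    by (simp add: LIMSEQ_const_iff)
  moreover have "(\<lambda>u. g (of_real u) * of_real (cot (pi * u))) integrable_on {0..1}"
    using partial[of 0] by (rule has_integral_integrable)
  ultimately show ?thesis
    using integrable_integral by metis
qed

lemma hurwitz_kernel_holomorphic: "hurwitz_kernel b k holomorphic_on UNIV"
  unfolding hurwitz_kernel_def[abs_def] d_poly_def by (auto intro!: holomorphic_intros)

lemma hurwitz_kernel_at_0: "k \<ge> 2 \<Longrightarrow> b \<notin> \<int> \<Longrightarrow> hurwitz_kernel b k 0 = 0"
  by (simp add: hurwitz_kernel_def d_poly_boundary)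

lemma hurwitz_kernel_at_1: "hurwitz_kernel b k 1 = 0"
  by (simp add: hurwitz_kernel_def)

lemma hurwitz_kernel_eq_sum:
  "hurwitz_kernel b k s = (\<Sum>j=1..k. d_coef j b *
      (s ^ (k - j) * exp (- 2 * pi * \<i> * b * s) - exp (- 2 * pi * \<i> * b)) / (fact (j - 1) * fact (k - j)))"
proof -
  have "(\<Sum>j=1..k. d_coef j b * (s ^ (k - j) * exp (- 2 * pi * \<i> * b * s) - exp (- 2 * pi * \<i> * b))
                     / (fact (j - 1) * fact (k - j)))
      = (\<Sum>j=1..k. d_coef j b * s ^ (k - j) / (fact (j - 1) * fact (k - j)) * exp (- 2 * pi * \<i> * b * s)
                   - exp (- 2 * pi * \<i> * b) * (d_coef j b * 1 ^ (k - j) / (fact (j - 1) * fact (k - j))))"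
    by (intro sum.cong refl) (simp add: field_simps)
  then show ?thesis
    by (simp add: hurwitz_kernel_def d_poly_def sum_subtractf sum_distrib_left sum_distrib_right)
qed

lemma hurwitz_zeta_sums:
  assumes "k \<ge> 2" "b \<notin> \<int>"
  shows "(\<lambda>j. 1 / (of_nat j + b) ^ k) sums hurwitz_zeta k b"
proof -
  have "b \<noteq> 0"
    using assms(2) by auto
  with assms(1) have "summable (\<lambda>j. inverse ((b + of_nat j) ^ k))"
    by (rule Polygamma_converges'[rotated])
  then show ?thesis
    by (simp add: hurwitz_zeta_def summable_sums add.commute divide_inverse)
qed

lemma fourier_coeff_hurwitz_kernel_sums:
  assumes "k \<ge> 2" "b \<notin> \<int>"
  shows "(\<lambda>n. fourier_coeff (hurwitz_kernel b k) (Suc n))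
           sums ((hurwitz_zeta k b - 1 / b ^ k) / (2 * pi * \<i>) ^ k)"
proof -
  have "(\<lambda>n. 1 / (of_nat (Suc n) + b) ^ k) sums (hurwitz_zeta k b - 1 / b ^ k)"
    using hurwitz_zeta_sums[OF assms] by (subst sums_Suc_iff) simp
  then have "(\<lambda>n. 1 / (of_nat (Suc n) + b) ^ k / (2 * pi * \<i>) ^ k)
               sums ((hurwitz_zeta k b - 1 / b ^ k) / (2 * pi * \<i>) ^ k)"
    by (rule sums_divide)
  moreover have "fourier_coeff (hurwitz_kernel b k) (Suc n) = 1 / (of_nat (Suc n) + b) ^ k / (2 * pi * \<i>) ^ k" for n
    using fourier_coeff_hurwitz_kernel[of k b "Suc n"] assms by (simp add: power_mult_distrib add.commute)
  ultimately show ?thesis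
    by simp
qed

lemma has_integral_hurwitz_kernel_cot:
  assumes "k \<ge> 2" "b \<notin> \<int>"
  shows "((\<lambda>u. hurwitz_kernel b k (of_real u) * of_real (cot (pi * u))) has_integral
           \<i> * (1 / (2 * pi * \<i> * b) ^ k - exp (- 2 * pi * \<i> * b) * d_poly b k 1)
           + 2 * \<i> * ((hurwitz_zeta k b - 1 / b ^ k) / (2 * pi * \<i>) ^ k)) {0..1}"
proof -
  obtain H S where "open S" "H holomorphic_on S" "complex_of_real ` {0..1} \<subseteq> S"
      "\<And>s. s \<in> S \<Longrightarrow> hurwitz_kernel b k s = H s * (1 - exp (- 2 * pi * \<i> * s))"
    using entire_divide_one_minus_exp[OF hurwitz_kernel_holomorphic hurwitz_kernel_at_0[OF assms]
                                         hurwitz_kernel_at_1] by metis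
  note series = has_integral_cot_fourier_series[OF this(2,1,3,4) fourier_coeff_hurwitz_kernel_sums[OF assms]]
  have "fourier_coeff (hurwitz_kernel b k) 0
          = 1 / (2 * pi * \<i> * b) ^ k - exp (- 2 * pi * \<i> * b) * d_poly b k 1"
    using fourier_coeff_hurwitz_kernel[of k b 0] assms by simp
  with series show ?thesis
    by (simp only:)
qed

theorem mainTheorem3:
  fixes k :: nat and b :: complex
  assumes "k \<ge> 2" and "b \<notin> \<int>"
  shows "(\<lambda>u. (\<Sum>j=1..k. d_coef j b *
              (of_real u ^ (k - j) * exp (- 2 * pi * \<i> * b * of_real u) - exp (- 2 * pi * \<i> * b))
              / (fact (j - 1) * fact (k - j))) * of_real (cot (pi * u))) integrable_on {0..1}
    \<and> hurwitz_zeta k b =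
        1 / (2 * b ^ k)
      + (2 * pi * \<i>) ^ k * d_coef k b / (4 * fact (k - 1))
      + (2 * pi * \<i>) ^ k * exp (- 2 * pi * \<i> * b) / 4 *
          (\<Sum>j=1..k. d_coef j b / (fact (j - 1) * fact (k - j)))
      - \<i> * (2 * pi * \<i>) ^ k / 2 *
          integral {0..1} (\<lambda>u. (\<Sum>j=1..k. d_coef j b *
              (of_real u ^ (k - j) * exp (- 2 * pi * \<i> * b * of_real u) - exp (- 2 * pi * \<i> * b))
              / (fact (j - 1) * fact (k - j))) * of_real (cot (pi * u)))"
proof -
  have solve_for_zeta: "Z = 1 / (2 * Y) + X * (F * (w * P)) / (4 * F) + X * w / 4 * P - \<i> * X / 2 * J"
    if "J = \<i> * (1 / (X * Y) - w * P) + 2 * \<i> * ((Z - 1 / Y) / X)" "X \<noteq> 0" "Y \<noteq> 0" "F \<noteq> 0"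
    for X Y F w P J Z :: complex
    unfolding that(1) using that(2-4) by (simp add: field_simps)
  note I = has_integral_hurwitz_kernel_cot[OF assms, unfolded hurwitz_kernel_eq_sum]
  have "(2 * pi * \<i> * b) ^ k = (2 * pi * \<i>) ^ k * b ^ k"
    by (simp add: power_mult_distrib)
  note J = integral_unique[OF I, unfolded this]
  have d_k: "d_coef k b = fact (k - 1) * (exp (- 2 * pi * \<i> * b) * d_poly b k 1)"
    using d_poly_boundary[OF assms] d_poly_at_0[of k b] assms(1) by (simp add: field_simps)
  have coeff_sum: "(\<Sum>j=1..k. d_coef j b / (fact (j - 1) * fact (k - j))) = d_poly b k 1"
    by (simp add: d_poly_def)
  have "(2 * pi * \<i>) ^ k \<noteq> (0::complex)" "b ^ k \<noteq> 0" "fact (k - 1) \<noteq> (0::complex)"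
    using assms(2) by auto
  then show ?thesis
    unfolding d_k coeff_sum by (intro conjI has_integral_integrable[OF I] solve_for_zeta[OF J])
qed

end
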